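(* Let $C\ge 2$ and let $D$ be an even positive integer. Let $\mu_1,\dots,\mu_C\in\mathbb{R}^D$ be unit vectors with $\mu_j^\top\mu_{j'}=-\frac{1}{C-1}$ for all $j\neq j'$ (a unit-norm simplex ETF). Let $\alpha\in[0,\pi/2]$, let $A\in\mathbb{R}^{D\times D}$ satisfy $A^\top=-A$ and $A^2=-I$, set $R=\cos\alpha\,I+\sin\alpha\,A$ and classifier weights $w_j=R\mu_j$ (so that $\mu_j^\top w_j=\cos\alpha$ and the $w_j$ also form a unit-norm simplex ETF), with zero biases. For a class $c$ and noise level $\sigma>0$, let $h=\mu_c+z$ with $z\sim\mathcal{N}(0,\sigma^2 I_D)$, let $\hat\gamma(h)=\arg\max_{j}\langle w_j,h\rangle$, and for $c'\neq c$ let $$\beta_{c,c'}=\lim_{\sigma\to 0}\bigl(-\sigma^2\log P_\sigma\{\hat\gamma(h)=c'\mid \gamma=c\}\bigr).$$ Then for every class $c$, $$\min_{c'\neq c}\beta_{c,c'}\;\le\;\frac14\cos^2\alpha\,\frac{C}{C-1}\;=\;\cos^2\alpha\;\beta^*,\qquad\text{where }\beta^*=\frac{C}{4(C-1)}.$$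
   Context: Here $\gamma$ denotes the true class label of the observation $h$, and $P_\sigma$ is the probability over the Gaussian noise $z$ at noise level $\sigma$. The quantity $\beta^*=\frac{C}{C-1}\cdot\frac14$ is the optimal (large-deviations) error exponent attained when class means and classifier weights are perfectly aligned unit-norm simplex ETFs with zero bias. *)

theory Defs
  imports "HOL-Probability.Probability"
begin

definition gauss_density :: "real \<Rightarrow> real^'n \<Rightarrow> real^'n \<Rightarrow> real" where
  "gauss_density \<sigma> m x =
     (2 * pi * \<sigma>\<^sup>2) powr (- real CARD('n) / 2) * exp (- (norm (x - m))\<^sup>2 / (2 * \<sigma>\<^sup>2))"

definition gaussian_measure :: "real \<Rightarrow> real^'n \<Rightarrow> (real^'n) measure" where
  "gaussian_measure \<sigma> m = density lborel (\<lambda>x. ennreal (gauss_density \<sigma> m x))"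

text \<open>Event that the arg-max classifier with weights w over classes 0..<C outputs c'
  (ties have probability zero).\<close>
definition pred_event :: "nat \<Rightarrow> (nat \<Rightarrow> real^'n) \<Rightarrow> nat \<Rightarrow> (real^'n) set" where
  "pred_event C w c' = {h. \<forall>j<C. j \<noteq> c' \<longrightarrow> w j \<bullet> h < w c' \<bullet> h}"

definition miscl_prob :: "nat \<Rightarrow> (nat \<Rightarrow> real^'n) \<Rightarrow> (nat \<Rightarrow> real^'n) \<Rightarrow> nat \<Rightarrow> nat \<Rightarrow> real \<Rightarrow> real" where
  "miscl_prob C \<mu> w c c' \<sigma> = measure (gaussian_measure \<sigma> (\<mu> c)) (pred_event C w c')"

end

(*
  For an open convex set E, the Gaussian law N(m, sigma^2 I) satisfies
  -sigma^2 ln P(E) --> d(m, E)^2 / 2 as sigma --> 0: from above, a Chernoff bound over a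
  hyperplane separating E from the open ball of radius d(m, E) around m; from below, the
  mass of a small ball inside E near a nearest point.  The decision region of every class
  is an open convex polyhedron, so beta_{c,c'} = d(mu_c, region of c')^2 / 2.

  The map R preserves inner products, so the w_j again form a simplex ETF, and the scores
  t_j = <w_j, mu_c> sum to zero with t_c = cos alpha.  The class c' with the largest score
  among j <> c therefore has t_{c'} >= - cos alpha / (C - 1), and the point
  mu_c + (cos alpha / 2) (w_{c'} - w_c), at distance (cos alpha / 2) sqrt (2C / (C - 1))
  from mu_c, lies on the closure of the region of c'.
*)
theory Submission
  imports Defs "HOL-Real_Asymp.Real_Asymp"
begin

section \<open>Small-noise asymptotics of Gaussian measures of convex sets\<close>

lemma gauss_density_nonneg: "gauss_density \<sigma> m x \<ge> 0"
  unfolding gauss_density_def by simp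

lemma borel_measurable_gauss_density [measurable]: "gauss_density \<sigma> m \<in> borel_measurable borel"
  unfolding gauss_density_def[abs_def] by measurable

lemma gauss_density_eq_prod_normal_density:
  fixes m x :: "real^'n"
  assumes "\<sigma> > 0"
  shows "gauss_density \<sigma> m x = (\<Prod>b\<in>Basis. normal_density (m \<bullet> b) \<sigma> (x \<bullet> b))"
proof -
  have pos: "2 * pi * \<sigma>\<^sup>2 > 0"
    using assms by simp
  have "(\<Prod>b\<in>(Basis :: (real^'n) set). 1 / sqrt (2 * pi * \<sigma>\<^sup>2))
      = ((2 * pi * \<sigma>\<^sup>2) powr (- 1/2)) ^ CARD('n)"
    using pos by (simp add: powr_minus_divide powr_half_sqrt[symmetric])
  also have "\<dots> = (2 * pi * \<sigma>\<^sup>2) powr (- real CARD('n) / 2)"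
    using pos by (subst powr_realpow[symmetric]) (auto simp: powr_powr)
  finally have const: "(\<Prod>b\<in>(Basis :: (real^'n) set). 1 / sqrt (2 * pi * \<sigma>\<^sup>2))
      = (2 * pi * \<sigma>\<^sup>2) powr (- real CARD('n) / 2)" .
  have "(norm (x - m))\<^sup>2 = (\<Sum>b\<in>Basis. (x \<bullet> b - m \<bullet> b)\<^sup>2)"
    by (subst power2_norm_eq_inner, subst euclidean_inner)
      (simp add: power2_eq_square inner_diff_left)
  then have expo: "(\<Prod>b\<in>(Basis :: (real^'n) set). exp (- (x \<bullet> b - m \<bullet> b)\<^sup>2 / (2 * \<sigma>\<^sup>2)))
      = exp (- (norm (x - m))\<^sup>2 / (2 * \<sigma>\<^sup>2))"
    by (simp add: exp_sum[symmetric] sum_divide_distrib sum_negf)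
  show ?thesis
    unfolding gauss_density_def normal_density_def prod.distrib const expo ..
qed

lemma nn_integral_gauss_density:
  fixes m :: "real^'n"
  assumes "\<sigma> > 0"
  shows "(\<integral>\<^sup>+x. ennreal (gauss_density \<sigma> m x) \<partial>lborel) = 1"
proof -
  have "(\<integral>\<^sup>+x. ennreal (gauss_density \<sigma> m x) \<partial>lborel)
     = (\<integral>\<^sup>+x. (\<Prod>b\<in>Basis. ennreal (normal_density (m \<bullet> b) \<sigma> (x \<bullet> b))) \<partial>lborel)"
    by (simp add: gauss_density_eq_prod_normal_density[OF assms] prod_ennreal)
  also have "\<dots> = (\<Prod>b\<in>(Basis :: (real^'n) set). \<integral>\<^sup>+y. ennreal (normal_density (m \<bullet> b) \<sigma> y) \<partial>lborel)"
    by (rule nn_integral_lborel_prod) auto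
  also have "\<dots> = 1"
    using assms by (simp add: nn_integral_eq_integral)
  finally show ?thesis .
qed

lemma emeasure_gaussian_measure:
  assumes "E \<in> sets borel"
  shows "emeasure (gaussian_measure \<sigma> m) E = (\<integral>\<^sup>+x. ennreal (gauss_density \<sigma> m x) * indicator E x \<partial>lborel)"
  unfolding gaussian_measure_def using assms by (subst emeasure_density) auto

lemma prob_space_gaussian_measure:
  fixes m :: "real^'n"
  assumes "\<sigma> > 0"
  shows "prob_space (gaussian_measure \<sigma> m)"
proof
  have "space (gaussian_measure \<sigma> m) = UNIV"
    by (simp add: gaussian_measure_def)
  then show "emeasure (gaussian_measure \<sigma> m) (space (gaussian_measure \<sigma> m)) = 1"
    using nn_integral_gauss_density[OF assms, of m] by (simp add: emeasure_gaussian_measure)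
qed

lemma gauss_density_mult_exp_inner:
  fixes m x u :: "real^'n"
  assumes "\<sigma> > 0" "norm u = 1"
  shows "gauss_density \<sigma> m x * exp (l * (u \<bullet> (x - m)))
       = exp (l\<^sup>2 * \<sigma>\<^sup>2 / 2) * gauss_density \<sigma> (m + (l * \<sigma>\<^sup>2) *\<^sub>R u) x"
proof -
  have uu: "u \<bullet> u = 1"
    using assms(2) by (simp add: norm_eq_1)
  have "(norm (x - (m + (l * \<sigma>\<^sup>2) *\<^sub>R u)))\<^sup>2
      = (norm (x - m))\<^sup>2 - 2 * (l * \<sigma>\<^sup>2) * (u \<bullet> (x - m)) + (l * \<sigma>\<^sup>2)\<^sup>2"
    unfolding power2_norm_eq_inner
    by (simp add: inner_diff_left inner_diff_right inner_add_left inner_add_right uu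
        inner_commute power2_eq_square algebra_simps)
  then have "- (norm (x - m))\<^sup>2 / (2 * \<sigma>\<^sup>2) + l * (u \<bullet> (x - m))
      = l\<^sup>2 * \<sigma>\<^sup>2 / 2 + - (norm (x - (m + (l * \<sigma>\<^sup>2) *\<^sub>R u)))\<^sup>2 / (2 * \<sigma>\<^sup>2)"
    using assms(1) by (simp add: field_simps power2_eq_square)
  then show ?thesis
    unfolding gauss_density_def by (simp add: exp_add[symmetric] mult_ac)
qed

lemma gaussian_measure_halfspace_le:
  fixes m u :: "real^'n"
  assumes \<sigma>: "\<sigma> > 0" and u: "norm u = 1" and "s \<ge> 0" and E: "E \<in> sets borel"
    and E_sub: "E \<subseteq> {x. s \<le> u \<bullet> (x - m)}"
  shows "measure (gaussian_measure \<sigma> m) E \<le> exp (- s\<^sup>2 / (2 * \<sigma>\<^sup>2))"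
proof -
  define l where "l = s / \<sigma>\<^sup>2"
  define K where "K = exp (- s\<^sup>2 / (2 * \<sigma>\<^sup>2))"
  have l: "l \<ge> 0" and K: "K = exp (- l * s) * exp (l\<^sup>2 * \<sigma>\<^sup>2 / 2)"
    using assms by (simp_all add: l_def K_def exp_add[symmetric] field_simps power2_eq_square)
  have pointwise: "gauss_density \<sigma> m x * indicator E x
      \<le> K * gauss_density \<sigma> (m + (l * \<sigma>\<^sup>2) *\<^sub>R u) x" for x
  proof -
    have "indicator E x \<le> exp (l * (u \<bullet> (x - m)) - l * s)"
      using E_sub l by (auto simp: indicator_def intro: mult_left_mono)
    then have "gauss_density \<sigma> m x * indicator E x
        \<le> gauss_density \<sigma> m x * exp (l * (u \<bullet> (x - m)) - l * s)"
      by (rule mult_left_mono[OF _ gauss_density_nonneg])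
    also have "\<dots> = gauss_density \<sigma> m x * exp (l * (u \<bullet> (x - m))) * exp (- l * s)"
      by (simp add: mult.assoc exp_add[symmetric])
    also have "\<dots> = K * gauss_density \<sigma> (m + (l * \<sigma>\<^sup>2) *\<^sub>R u) x"
      by (simp add: gauss_density_mult_exp_inner[OF \<sigma> u] K)
    finally show ?thesis .
  qed
  have "emeasure (gaussian_measure \<sigma> m) E
      = (\<integral>\<^sup>+x. ennreal (gauss_density \<sigma> m x * indicator E x) \<partial>lborel)"
    by (simp add: emeasure_gaussian_measure[OF E] gauss_density_nonneg ennreal_mult' ennreal_indicator)
  also have "\<dots> \<le> (\<integral>\<^sup>+x. ennreal K * ennreal (gauss_density \<sigma> (m + (l * \<sigma>\<^sup>2) *\<^sub>R u) x) \<partial>lborel)"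
    using pointwise by (intro nn_integral_mono) (simp add: K_def ennreal_mult'[symmetric] ennreal_leI)
  also have "\<dots> = ennreal K"
    by (simp add: nn_integral_cmult nn_integral_gauss_density[OF \<sigma>])
  finally show ?thesis
    unfolding measure_def K_def by (simp add: enn2real_leI)
qed

lemma gaussian_measure_ball_ge:
  fixes m q :: "real^'n"
  assumes \<sigma>: "\<sigma> > 0" and "r > 0"
  shows "unit_ball_vol (real CARD('n)) * r ^ CARD('n) * (2 * pi * \<sigma>\<^sup>2) powr (- real CARD('n) / 2)
           * exp (- (dist q m + r)\<^sup>2 / (2 * \<sigma>\<^sup>2))
         \<le> measure (gaussian_measure \<sigma> m) (ball q r)"
proof -
  define c where "c = (2 * pi * \<sigma>\<^sup>2) powr (- real CARD('n) / 2) * exp (- (dist q m + r)\<^sup>2 / (2 * \<sigma>\<^sup>2))"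
  have c: "c \<ge> 0"
    unfolding c_def by simp
  interpret prob_space "gaussian_measure \<sigma> m"
    by (rule prob_space_gaussian_measure[OF \<sigma>])
  have pointwise: "c \<le> gauss_density \<sigma> m x" if "x \<in> ball q r" for x
  proof -
    have "norm (x - m) \<le> dist q m + r"
      using that norm_triangle_ineq[of "x - q" "q - m"] by (simp add: dist_norm norm_minus_commute)
    then have "(norm (x - m))\<^sup>2 / (2 * \<sigma>\<^sup>2) \<le> (dist q m + r)\<^sup>2 / (2 * \<sigma>\<^sup>2)"
      using \<sigma> by (simp add: power_mono divide_right_mono)
    then show ?thesis
      unfolding c_def gauss_density_def by (intro mult_left_mono) auto
  qed
  have "ennreal (c * (unit_ball_vol (real CARD('n)) * r ^ CARD('n)))
      = (\<integral>\<^sup>+x. ennreal c * indicator (ball q r) x \<partial>lborel)"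
    using assms c by (simp add: emeasure_ball ennreal_mult nn_integral_cmult_indicator)
  also have "\<dots> \<le> (\<integral>\<^sup>+x. ennreal (gauss_density \<sigma> m x) * indicator (ball q r) x \<partial>lborel)"
    using pointwise by (intro nn_integral_mono) (simp add: indicator_def ennreal_leI)
  also have "\<dots> = ennreal (measure (gaussian_measure \<sigma> m) (ball q r))"
    by (simp add: emeasure_gaussian_measure[symmetric] emeasure_eq_measure)
  finally show ?thesis
    unfolding c_def by (simp add: ennreal_le_iff mult_ac)
qed

lemma convex_subset_halfspace_infdist:
  fixes m :: "'a::euclidean_space"
  assumes E: "convex E" and d: "infdist m E > 0"
  obtains u where "norm u = 1" "E \<subseteq> {x. infdist m E \<le> u \<bullet> (x - m)}"
proof -
  define d where "d = infdist m E"
  have "E \<noteq> {}"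
    using d by (auto simp: infdist_def)
  moreover have "ball m d \<inter> E = {}"
    using infdist_le[of _ E m] by (force simp: d_def)
  ultimately obtain a b where a: "a \<noteq> 0" and ball: "\<forall>x\<in>ball m d. a \<bullet> x \<le> b"
      and E_ge: "\<forall>x\<in>E. b \<le> a \<bullet> x"
    using separating_hyperplane_sets[of "ball m d" E] E d by (auto simp: d_def)
  define u where "u = a /\<^sub>R norm a"
  have u: "norm u = 1"
    using a by (simp add: u_def)
  have a_u: "a \<bullet> u = norm a"
    using a by (simp add: u_def power2_norm_eq_inner[symmetric] power2_eq_square)
  have "d \<le> (b - a \<bullet> m) / norm a"
  proof (rule dense_le_bounded[of 0])
    show "0 < d"
      using d by (simp add: d_def)
    fix t :: real
    assume "0 < t" "t < d"
    then have "a \<bullet> (m + t *\<^sub>R u) \<le> b"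
      using ball u by (simp add: dist_norm)
    then show "t \<le> (b - a \<bullet> m) / norm a"
      using a by (simp add: inner_add_right a_u field_simps)
  qed
  moreover have "u \<bullet> (x - m) = (a \<bullet> x - a \<bullet> m) / norm a" for x
    by (simp add: u_def inner_diff_right divide_inverse right_diff_distrib mult.commute)
  moreover have "(b - a \<bullet> m) / norm a \<le> (a \<bullet> x - a \<bullet> m) / norm a" if "x \<in> E" for x
    using E_ge that by (intro divide_right_mono) auto
  ultimately have "E \<subseteq> {x. d \<le> u \<bullet> (x - m)}"
    by force
  with u show ?thesis
    using that d_def by blast
qed

lemma gaussian_measure_convex_le:
  fixes m :: "real^'n"
  assumes \<sigma>: "\<sigma> > 0" and "convex E" "E \<in> sets borel"
  shows "measure (gaussian_measure \<sigma> m) E \<le> exp (- (infdist m E)\<^sup>2 / (2 * \<sigma>\<^sup>2))"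
proof (cases "infdist m E = 0")
  case True
  interpret prob_space "gaussian_measure \<sigma> m"
    by (rule prob_space_gaussian_measure[OF \<sigma>])
  show ?thesis
    using True by simp
next
  case False
  then have "infdist m E > 0"
    using infdist_nonneg[of m E] by linarith
  then obtain u where "norm u = 1" "E \<subseteq> {x. infdist m E \<le> u \<bullet> (x - m)}"
    using convex_subset_halfspace_infdist \<open>convex E\<close> by blast
  then show ?thesis
    using gaussian_measure_halfspace_le assms infdist_nonneg by blast
qed

lemma gaussian_measure_open_pos:
  fixes m :: "real^'n"
  assumes \<sigma>: "\<sigma> > 0" and "open E" "E \<noteq> {}"
  shows "measure (gaussian_measure \<sigma> m) E > 0"
proof -
  interpret prob_space "gaussian_measure \<sigma> m"
    by (rule prob_space_gaussian_measure[OF \<sigma>])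
  obtain q r where r: "r > 0" "ball q r \<subseteq> E"
    using assms by (meson ex_in_conv openE)
  have "0 < unit_ball_vol (real CARD('n)) * r ^ CARD('n) * (2 * pi * \<sigma>\<^sup>2) powr (- real CARD('n) / 2)
           * exp (- (dist q m + r)\<^sup>2 / (2 * \<sigma>\<^sup>2))"
    using r \<sigma> by simp
  also have "\<dots> \<le> measure (gaussian_measure \<sigma> m) (ball q r)"
    by (rule gaussian_measure_ball_ge[OF \<sigma> r(1)])
  also have "\<dots> \<le> measure (gaussian_measure \<sigma> m) E"
    using r \<open>open E\<close> by (intro finite_measure_mono) (auto simp: gaussian_measure_def)
  finally show ?thesis .
qed

lemma neg_sq_ln_gaussian_measure_ge:
  fixes m :: "real^'n"
  assumes "\<sigma> > 0" and "open E" "convex E" "E \<noteq> {}"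
  shows "(infdist m E)\<^sup>2 / 2 \<le> - \<sigma>\<^sup>2 * ln (measure (gaussian_measure \<sigma> m) E)"
proof -
  have "ln (measure (gaussian_measure \<sigma> m) E) \<le> ln (exp (- (infdist m E)\<^sup>2 / (2 * \<sigma>\<^sup>2)))"
    using gaussian_measure_convex_le[of \<sigma> E m] gaussian_measure_open_pos[of \<sigma> E m] assms
    by (subst ln_le_cancel_iff) auto
  then have "ln (measure (gaussian_measure \<sigma> m) E) \<le> - (infdist m E)\<^sup>2 / (2 * \<sigma>\<^sup>2)"
    by simp
  then have "\<sigma>\<^sup>2 * ln (measure (gaussian_measure \<sigma> m) E) \<le> \<sigma>\<^sup>2 * (- (infdist m E)\<^sup>2 / (2 * \<sigma>\<^sup>2))"
    by (rule mult_left_mono) simp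
  then show ?thesis
    using assms(1) by simp
qed

lemma eventually_neg_sq_ln_gaussian_measure_less:
  fixes m q :: "real^'n"
  assumes "open E" "q \<in> E" "dist q m < \<rho>"
  shows "\<forall>\<^sub>F \<sigma> in at_right 0. - \<sigma>\<^sup>2 * ln (measure (gaussian_measure \<sigma> m) E) < \<rho>\<^sup>2 / 2"
proof -
  obtain r0 where r0: "r0 > 0" "ball q r0 \<subseteq> E"
    using assms by (meson openE)
  define r where "r = min r0 ((\<rho> - dist q m) / 2)"
  have "r \<le> (\<rho> - dist q m) / 2"
    unfolding r_def by (rule min.cobounded2)
  then have r: "r > 0" "ball q r \<subseteq> E" "dist q m + r < \<rho>"
    using r0 assms(3) by (auto simp: r_def)
  define V where "V = unit_ball_vol (real CARD('n)) * r ^ CARD('n)"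
  have V: "V > 0"
    using r by (simp add: V_def)
  define L where "L \<sigma> = V * (2 * pi * \<sigma>\<^sup>2) powr (- real CARD('n) / 2) * exp (- (dist q m + r)\<^sup>2 / (2 * \<sigma>\<^sup>2))"
    for \<sigma> :: real
  have le_L: "- \<sigma>\<^sup>2 * ln (measure (gaussian_measure \<sigma> m) E) \<le> - \<sigma>\<^sup>2 * ln (L \<sigma>)" if "\<sigma> > 0" for \<sigma>
  proof -
    interpret prob_space "gaussian_measure \<sigma> m"
      by (rule prob_space_gaussian_measure[OF that])
    have "L \<sigma> \<le> measure (gaussian_measure \<sigma> m) (ball q r)"
      unfolding L_def V_def by (rule gaussian_measure_ball_ge[OF that r(1)])
    also have "\<dots> \<le> measure (gaussian_measure \<sigma> m) E"
      using r \<open>open E\<close> by (intro finite_measure_mono) (auto simp: gaussian_measure_def)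
    finally have "ln (L \<sigma>) \<le> ln (measure (gaussian_measure \<sigma> m) E)"
      using V that by (intro ln_mono) (simp_all add: L_def)
    then show ?thesis
      by (simp add: mult_left_mono)
  qed
  have L_eq: "- \<sigma>\<^sup>2 * ln (L \<sigma>)
      = - \<sigma>\<^sup>2 * ln V + real CARD('n) / 2 * (\<sigma>\<^sup>2 * ln (2 * pi * \<sigma>\<^sup>2)) + (dist q m + r)\<^sup>2 / 2"
    if "\<sigma> > 0" for \<sigma>
    using V that by (simp add: L_def ln_mult ln_powr field_simps)
  have "((\<lambda>\<sigma>::real. - \<sigma>\<^sup>2 * ln V + real CARD('n) / 2 * (\<sigma>\<^sup>2 * ln (2 * pi * \<sigma>\<^sup>2)) + (dist q m + r)\<^sup>2 / 2)
      \<longlongrightarrow> (dist q m + r)\<^sup>2 / 2) (at_right 0)"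
    by real_asymp
  moreover have "(dist q m + r)\<^sup>2 / 2 < \<rho>\<^sup>2 / 2"
    using r by (simp add: power_strict_mono)
  ultimately have "\<forall>\<^sub>F \<sigma> in at_right 0.
      - \<sigma>\<^sup>2 * ln V + real CARD('n) / 2 * (\<sigma>\<^sup>2 * ln (2 * pi * \<sigma>\<^sup>2)) + (dist q m + r)\<^sup>2 / 2 < \<rho>\<^sup>2 / 2"
    by (rule order_tendstoD(2))
  with eventually_at_right_less[of 0] show ?thesis
    by eventually_elim (use le_L L_eq in fastforce)
qed

lemma tendsto_neg_sq_ln_gaussian_measure:
  fixes m :: "real^'n"
  assumes E: "open E" "convex E" "E \<noteq> {}"
  shows "((\<lambda>\<sigma>. - \<sigma>\<^sup>2 * ln (measure (gaussian_measure \<sigma> m) E)) \<longlongrightarrow> (infdist m E)\<^sup>2 / 2) (at_right 0)"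
proof (rule order_tendstoI)
  fix a
  assume "a < (infdist m E)\<^sup>2 / 2"
  then show "\<forall>\<^sub>F \<sigma> in at_right 0. a < - \<sigma>\<^sup>2 * ln (measure (gaussian_measure \<sigma> m) E)"
    using neg_sq_ln_gaussian_measure_ge[OF _ E, of _ m]
    by (intro eventually_mono[OF eventually_at_right_less[of 0]]) fastforce
next
  fix a
  assume a: "(infdist m E)\<^sup>2 / 2 < a"
  have "a > 0"
    using a zero_le_power2[of "infdist m E"] by linarith
  define \<rho> where "\<rho> = sqrt (2 * a)"
  have \<rho>: "\<rho>\<^sup>2 / 2 = a"
    using \<open>a > 0\<close> by (simp add: \<rho>_def)
  have "infdist m E < \<rho>"
    using a infdist_nonneg[of m E] by (simp add: \<rho>_def real_less_rsqrt)
  have bdd: "bdd_below (dist m ` E)"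
    by (rule bdd_belowI[of _ 0]) auto
  have "\<exists>q\<in>E. dist m q < \<rho>"
    using \<open>infdist m E < \<rho>\<close> by (simp add: infdist_notempty[OF E(3)] cINF_less_iff[OF E(3) bdd])
  then obtain q where "q \<in> E" "dist q m < \<rho>"
    by (auto simp: dist_commute)
  from eventually_neg_sq_ln_gaussian_measure_less[OF E(1) this]
  show "\<forall>\<^sub>F \<sigma> in at_right 0. - \<sigma>\<^sup>2 * ln (measure (gaussian_measure \<sigma> m) E) < a"
    unfolding \<rho> .
qed

section \<open>Decision regions of a rotated simplex ETF\<close>

lemma uminus_matrix_vector_mult: "(- A) *v x = - (A *v (x::real^'n))"
  by (simp add: vec_eq_iff matrix_vector_mult_def sum_negf)

lemma skew_matrix_inner:
  fixes A :: "real^'n^'n"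
  assumes "transpose A = - A"
  shows "(A *v x) \<bullet> y = - (x \<bullet> (A *v y))"
proof -
  have "(A *v x) \<bullet> y = (x v* transpose A) \<bullet> y"
    by simp
  also have "\<dots> = x \<bullet> (transpose A *v y)"
    by (rule dot_lmul_matrix)
  finally show ?thesis
    by (simp add: assms uminus_matrix_vector_mult)
qed

lemma rotation_matrix_vector_mult:
  "(cos a *\<^sub>R mat 1 + sin a *\<^sub>R A) *v x = cos a *\<^sub>R x + sin a *\<^sub>R (A *v (x::real^'n))"
  by (simp add: matrix_vector_mult_add_rdistrib scaleR_matrix_vector_assoc[symmetric])

lemma rotation_inner_self:
  fixes A :: "real^'n^'n"
  assumes "transpose A = - A"
  shows "((cos a *\<^sub>R mat 1 + sin a *\<^sub>R A) *v x) \<bullet> x = cos a * (x \<bullet> x)"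
proof -
  have "(A *v x) \<bullet> x = 0"
    using skew_matrix_inner[OF assms, of x x] by (simp add: inner_commute)
  then show ?thesis
    unfolding rotation_matrix_vector_mult by (simp add: inner_add_left)
qed

lemma rotation_inner_rotation:
  fixes A :: "real^'n^'n"
  assumes skew: "transpose A = - A" and sq: "A ** A = - mat 1"
  shows "((cos a *\<^sub>R mat 1 + sin a *\<^sub>R A) *v x) \<bullet> ((cos a *\<^sub>R mat 1 + sin a *\<^sub>R A) *v y) = x \<bullet> y"
proof -
  have cross: "(A *v x) \<bullet> y + x \<bullet> (A *v y) = 0"
    by (simp add: skew_matrix_inner[OF skew])
  have AA: "(A *v x) \<bullet> (A *v y) = x \<bullet> y"
    using skew_matrix_inner[OF skew, of x "A *v y"]
    by (simp add: matrix_vector_mul_assoc sq uminus_matrix_vector_mult)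
  have "((cos a *\<^sub>R mat 1 + sin a *\<^sub>R A) *v x) \<bullet> ((cos a *\<^sub>R mat 1 + sin a *\<^sub>R A) *v y)
      = (cos a)\<^sup>2 * (x \<bullet> y) + cos a * sin a * ((A *v x) \<bullet> y + x \<bullet> (A *v y))
        + (sin a)\<^sup>2 * ((A *v x) \<bullet> (A *v y))"
    unfolding rotation_matrix_vector_mult
    by (simp add: inner_add_left inner_add_right power2_eq_square algebra_simps)
  also have "\<dots> = x \<bullet> y"
    unfolding cross AA by (simp flip: distrib_right)
  finally show ?thesis .
qed

lemma sum_simplex_etf_eq_0:
  fixes \<mu> :: "nat \<Rightarrow> 'a::real_inner"
  assumes C: "C \<ge> 2" and unit: "\<forall>j<C. norm (\<mu> j) = 1"
    and etf: "\<forall>j<C. \<forall>j'<C. j \<noteq> j' \<longrightarrow> \<mu> j \<bullet> \<mu> j' = - 1 / (real C - 1)"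
  shows "(\<Sum>j<C. \<mu> j) = 0"
proof -
  have row: "(\<Sum>k<C. \<mu> j \<bullet> \<mu> k) = 0" if j: "j < C" for j
  proof -
    have "(\<Sum>k<C. \<mu> j \<bullet> \<mu> k) = \<mu> j \<bullet> \<mu> j + (\<Sum>k\<in>{..<C} - {j}. \<mu> j \<bullet> \<mu> k)"
      using j by (subst sum.remove[of _ j]) auto
    also have "\<dots> = 1 + (\<Sum>k\<in>{..<C} - {j}. - 1 / (real C - 1))"
      using j unit etf by (auto simp: norm_eq_1 intro!: sum.cong)
    also have "\<dots> = 0"
      using j C by (simp add: of_nat_diff)
    finally show ?thesis .
  qed
  have "(\<Sum>j<C. \<mu> j) \<bullet> (\<Sum>j<C. \<mu> j) = (\<Sum>j<C. \<Sum>k<C. \<mu> j \<bullet> \<mu> k)"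
    by (simp add: inner_sum_left inner_sum_right) (rule sum.swap)
  also have "\<dots> = 0"
    using row by simp
  finally show ?thesis
    by simp
qed

lemma exists_rival_ge_average:
  fixes t :: "nat \<Rightarrow> real"
  assumes "C \<ge> 2" "c < C" "(\<Sum>j<C. t j) = 0"
  obtains c' where "c' < C" "c' \<noteq> c" "\<forall>j<C. j \<noteq> c \<longrightarrow> t j \<le> t c'" "- t c \<le> (real C - 1) * t c'"
proof -
  define S where "S = {..<C} - {c}"
  have S: "finite S" "card S = C - 1"
    using assms by (simp_all add: S_def)
  then have "S \<noteq> {}"
    using assms by auto
  then have "Max (t ` S) \<in> t ` S"
    using S by simp
  then obtain c' where "c' \<in> S" "t c' = Max (t ` S)"
    by auto
  then have c': "c' \<in> S" "\<forall>j\<in>S. t j \<le> t c'"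
    using S by simp_all
  have "- t c = (\<Sum>j\<in>S. t j)"
    using assms by (simp add: S_def sum_diff1)
  also have "\<dots> \<le> real (card S) * t c'"
    using c' by (intro sum_bounded_above) auto
  finally have "- t c \<le> (real C - 1) * t c'"
    using S assms by (simp add: of_nat_diff)
  then show ?thesis
    using that c' by (auto simp: S_def)
qed

lemma open_pred_event: "open (pred_event C w c')"
  and convex_pred_event: "convex (pred_event C w c')"
proof -
  have "pred_event C w c' = (\<Inter>j\<in>{j. j < C \<and> j \<noteq> c'}. {h. (w j - w c') \<bullet> h < 0})"
    unfolding pred_event_def by (auto simp: inner_diff_left)
  then show "open (pred_event C w c')" "convex (pred_event C w c')"
    by (auto intro!: open_INT open_halfspace_lt convex_INT convex_halfspace_lt)
qed

text \<open>Moving from m along w c' - w c raises the score of c' against c and leaves all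
  other scores unchanged; the small extra step along w c' makes the inequalities strict.\<close>
lemma shift_mem_pred_event:
  fixes w :: "nat \<Rightarrow> real^'n"
  assumes gram: "\<forall>j<C. \<forall>k<C. w j \<bullet> w k = (if j = k then 1 else - \<kappa>)" and "\<kappa> > -1"
    and "c < C" "c' < C" "c' \<noteq> c" "s \<ge> 0" "\<epsilon> > 0"
    and rival: "\<forall>j<C. j \<noteq> c \<longrightarrow> w j \<bullet> m \<le> w c' \<bullet> m"
    and gap: "w c \<bullet> m - w c' \<bullet> m \<le> 2 * s * (1 + \<kappa>)"
  shows "m + s *\<^sub>R (w c' - w c) + \<epsilon> *\<^sub>R w c' \<in> pred_event C w c'"
  unfolding pred_event_def
proof (intro CollectI allI impI)
  fix j
  assume j: "j < C" "j \<noteq> c'"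
  have score: "w k \<bullet> (m + s *\<^sub>R (w c' - w c) + \<epsilon> *\<^sub>R w c')
      = w k \<bullet> m + s * (w k \<bullet> w c' - w k \<bullet> w c) + \<epsilon> * (w k \<bullet> w c')" for k
    by (simp add: inner_add_right inner_diff_right)
  have pos: "0 < \<epsilon> * (1 + \<kappa>)" "0 \<le> s * (1 + \<kappa>)"
    using assms by simp_all
  have "w c' \<bullet> m + s * (1 + \<kappa>) + \<epsilon> = w c' \<bullet> (m + s *\<^sub>R (w c' - w c) + \<epsilon> *\<^sub>R w c')"
    using gram assms unfolding score by (simp add: algebra_simps)
  moreover have "w j \<bullet> (m + s *\<^sub>R (w c' - w c) + \<epsilon> *\<^sub>R w c') < w c' \<bullet> m + s * (1 + \<kappa>) + \<epsilon>"
  proof (cases "j = c")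
    case True
    have "w j \<bullet> (m + s *\<^sub>R (w c' - w c) + \<epsilon> *\<^sub>R w c') = w c \<bullet> m - s * (1 + \<kappa>) - \<epsilon> * \<kappa>"
      using gram assms True unfolding score by (simp add: algebra_simps)
    then show ?thesis
      using gap pos by (simp add: algebra_simps)
  next
    case False
    have "w j \<bullet> (m + s *\<^sub>R (w c' - w c) + \<epsilon> *\<^sub>R w c') = w j \<bullet> m - \<epsilon> * \<kappa>"
      using gram assms j False unfolding score by simp
    moreover have "w j \<bullet> m \<le> w c' \<bullet> m"
      using rival j False by simp
    ultimately show ?thesis
      using pos by (simp add: algebra_simps)
  qed
  ultimately show "w j \<bullet> (m + s *\<^sub>R (w c' - w c) + \<epsilon> *\<^sub>R w c') < w c' \<bullet> (m + s *\<^sub>R (w c' - w c) + \<epsilon> *\<^sub>R w c')"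
    by simp
qed

lemma infdist_pred_event_le:
  fixes w :: "nat \<Rightarrow> real^'n"
  assumes gram: "\<forall>j<C. \<forall>k<C. w j \<bullet> w k = (if j = k then 1 else - \<kappa>)" and "\<kappa> > -1"
    and "c < C" "c' < C" "c' \<noteq> c" "s \<ge> 0"
    and rival: "\<forall>j<C. j \<noteq> c \<longrightarrow> w j \<bullet> m \<le> w c' \<bullet> m"
    and gap: "w c \<bullet> m - w c' \<bullet> m \<le> 2 * s * (1 + \<kappa>)"
  shows "infdist m (pred_event C w c') \<le> s * sqrt (2 * (1 + \<kappa>))"
proof (rule field_le_epsilon)
  fix \<epsilon> :: real
  assume "\<epsilon> > 0"
  have "(norm (w c' - w c))\<^sup>2 = 2 * (1 + \<kappa>)"
    using gram assms unfolding power2_norm_eq_inner by (simp add: inner_diff_left inner_diff_right)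
  then have "norm (w c' - w c) = sqrt (2 * (1 + \<kappa>))"
    by (metis norm_ge_zero real_sqrt_unique)
  moreover have "norm (w c') = 1"
    using gram assms by (simp add: norm_eq_1)
  ultimately have "norm (s *\<^sub>R (w c' - w c)) + norm (\<epsilon> *\<^sub>R w c') = s * sqrt (2 * (1 + \<kappa>)) + \<epsilon>"
    using \<open>s \<ge> 0\<close> \<open>\<epsilon> > 0\<close> by simp
  then have "dist m (m + s *\<^sub>R (w c' - w c) + \<epsilon> *\<^sub>R w c') \<le> s * sqrt (2 * (1 + \<kappa>)) + \<epsilon>"
    using norm_triangle_ineq[of "s *\<^sub>R (w c' - w c)" "\<epsilon> *\<^sub>R w c'"]
    by (metis add.assoc add.right_neutral dist_add_cancel dist_0_norm)
  then show "infdist m (pred_event C w c') \<le> s * sqrt (2 * (1 + \<kappa>)) + \<epsilon>"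
    using shift_mem_pred_event[OF assms(1-6) \<open>\<epsilon> > 0\<close> rival gap] by (rule infdist_le2[rotated])
qed

lemma exists_rival_region_near:
  fixes w :: "nat \<Rightarrow> real^'n"
  assumes C: "C \<ge> 2" and gram: "\<forall>j<C. \<forall>k<C. w j \<bullet> w k = (if j = k then 1 else - 1 / (real C - 1))"
    and c: "c < C" and scores: "(\<Sum>j<C. w j \<bullet> m) = 0" and "w c \<bullet> m \<ge> 0"
  obtains c' where "c' < C" "c' \<noteq> c" "pred_event C w c' \<noteq> {}"
    "(infdist m (pred_event C w c'))\<^sup>2 / 2 \<le> (1/4) * (w c \<bullet> m)\<^sup>2 * (real C / (real C - 1))"
proof -
  define \<kappa> where "\<kappa> = 1 / (real C - 1)"
  have \<kappa>: "\<kappa> > -1" "1 + \<kappa> = real C / (real C - 1)"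
    using C by (auto simp: \<kappa>_def field_simps)
  obtain c' where c': "c' < C" "c' \<noteq> c" and rival: "\<forall>j<C. j \<noteq> c \<longrightarrow> w j \<bullet> m \<le> w c' \<bullet> m"
      and avg: "- (w c \<bullet> m) \<le> (real C - 1) * (w c' \<bullet> m)"
    by (rule exists_rival_ge_average[OF C c scores])
  have gap: "w c \<bullet> m - w c' \<bullet> m \<le> 2 * (w c \<bullet> m / 2) * (1 + \<kappa>)"
    using avg C by (simp add: \<kappa>_def field_simps)
  have gram_\<kappa>: "\<forall>j<C. \<forall>k<C. w j \<bullet> w k = (if j = k then 1 else - \<kappa>)"
    using gram by (simp add: \<kappa>_def)
  have "w c \<bullet> m / 2 \<ge> 0"
    using assms by simp
  note setting = gram_\<kappa> \<kappa>(1) c c' this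
  have "pred_event C w c' \<noteq> {}"
    using shift_mem_pred_event[OF setting zero_less_one rival gap] by blast
  moreover have "(infdist m (pred_event C w c'))\<^sup>2 / 2 \<le> (1/4) * (w c \<bullet> m)\<^sup>2 * (real C / (real C - 1))"
  proof -
    have "infdist m (pred_event C w c') \<le> w c \<bullet> m / 2 * sqrt (2 * (1 + \<kappa>))"
      by (rule infdist_pred_event_le[OF setting rival gap])
    then have "(infdist m (pred_event C w c'))\<^sup>2 \<le> (w c \<bullet> m / 2 * sqrt (2 * (1 + \<kappa>)))\<^sup>2"
      by (intro power_mono infdist_nonneg)
    also have "\<dots> = (w c \<bullet> m)\<^sup>2 / 2 * (1 + \<kappa>)"
      using \<kappa>(1) by (simp add: power_mult_distrib power_divide)
    finally show ?thesis
      unfolding \<kappa>(2)[symmetric] by simp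
  qed
  ultimately show ?thesis
    using that c' by blast
qed

theorem theorem5:
  fixes C :: nat and \<mu> :: "nat \<Rightarrow> real^'n" and \<alpha> :: real and A :: "real^'n^'n"
    and c :: nat
  assumes C2: "C \<ge> 2"
    and D_even: "even CARD('n)"
    and unit: "\<forall>j<C. norm (\<mu> j) = 1"
    and etf: "\<forall>j<C. \<forall>j'<C. j \<noteq> j' \<longrightarrow> \<mu> j \<bullet> \<mu> j' = - 1 / (real C - 1)"
    and alpha: "0 \<le> \<alpha>" "\<alpha> \<le> pi / 2"
    and A_skew: "transpose A = - A"
    and A_sq: "A ** A = - mat 1"
    and c: "c < C"
  shows "\<exists>c'<C. c' \<noteq> c \<and>
           (\<exists>\<beta>. ((\<lambda>\<sigma>. - \<sigma>\<^sup>2 * ln (miscl_prob C \<mu>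
                      (\<lambda>j. (cos \<alpha> *\<^sub>R mat 1 + sin \<alpha> *\<^sub>R A) *v \<mu> j) c c' \<sigma>))
                   \<longlongrightarrow> \<beta>) (at_right 0)
                \<and> \<beta> \<le> (1/4) * (cos \<alpha>)\<^sup>2 * (real C / (real C - 1)))"
proof -
  define w where "w j = (cos \<alpha> *\<^sub>R mat 1 + sin \<alpha> *\<^sub>R A) *v \<mu> j" for j
  have gram: "\<forall>j<C. \<forall>k<C. w j \<bullet> w k = (if j = k then 1 else - 1 / (real C - 1))"
    using unit etf by (simp add: w_def rotation_inner_rotation[OF A_skew A_sq] norm_eq_1)
  have "(\<Sum>j<C. w j) = (cos \<alpha> *\<^sub>R mat 1 + sin \<alpha> *\<^sub>R A) *v (\<Sum>j<C. \<mu> j)"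
    unfolding w_def by (simp add: linear_sum[OF matrix_vector_mul_linear])
  then have scores: "(\<Sum>j<C. w j \<bullet> \<mu> c) = 0"
    by (simp add: sum_simplex_etf_eq_0[OF C2 unit etf] inner_sum_left[symmetric])
  have "w c \<bullet> \<mu> c = cos \<alpha>"
    using unit c by (simp add: w_def rotation_inner_self[OF A_skew] norm_eq_1)
  moreover have "cos \<alpha> \<ge> 0"
    using alpha by (intro cos_ge_zero) auto
  ultimately obtain c' where c': "c' < C" "c' \<noteq> c" and nonempty: "pred_event C w c' \<noteq> {}"
    and bound: "(infdist (\<mu> c) (pred_event C w c'))\<^sup>2 / 2 \<le> (1/4) * (cos \<alpha>)\<^sup>2 * (real C / (real C - 1))"
    using exists_rival_region_near[OF C2 gram c scores] by auto
  have "((\<lambda>\<sigma>. - \<sigma>\<^sup>2 * ln (miscl_prob C \<mu> w c c' \<sigma>)) \<longlongrightarrow> (infdist (\<mu> c) (pred_event C w c'))\<^sup>2 / 2) (at_right 0)"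
    unfolding miscl_prob_def
    by (rule tendsto_neg_sq_ln_gaussian_measure[OF open_pred_event convex_pred_event nonempty])
  with c' bound show ?thesis
    unfolding w_def by blast
qed

end
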